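(* Let $G$ be a graph, let $\epsilon,\epsilon'$ be positive constants with $\epsilon+\epsilon'<1/2$, let $K$ be an $\epsilon$-almost-clique-like set of nodes, and let $k$ be an integer. Consider a $k$-bucketing of $K$ chosen uniformly at random (each $v\in K$ independently picks $t(v)\in[k]$ uniformly). Then for each $i\in[k]$, the probability that the $i$-th bucket fails to be $\epsilon'$-almost-clique-preserved is at most $2|K|\exp(-\epsilon'^2|K|/(6k))$.
   Context: $N(v)$ is the set of neighbors of $v$ in $G$. A set $K$ is $\epsilon$-almost-clique-like if $|N(v)\cap K|\ge(1-\epsilon)|K|$ for all $v\in K$. A $k$-bucketing of $K$ assigns $t(v)\in[k]$ to each $v\in K$, with buckets $T_j=\{v\in K:t(v)=j\}$. The $i$-th bucket $T_i$ is $\epsilon'$-almost-clique-preserved if for every $v\in K$, $(1-\epsilon')|N(v)\cap K|/k\le|N(v)\cap T_i|\le(1+\epsilon')|N(v)\cap K|/k$. *)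

theory Defs
  imports "HOL-Probability.Probability"
begin

definition nbrs :: "('a \<Rightarrow> 'a \<Rightarrow> bool) \<Rightarrow> 'a \<Rightarrow> 'a set" where
  "nbrs E v = {u. E v u}"

definition almost_clique_like :: "('a \<Rightarrow> 'a \<Rightarrow> bool) \<Rightarrow> real \<Rightarrow> 'a set \<Rightarrow> bool" where
  "almost_clique_like E eps K \<longleftrightarrow>
     (\<forall>v\<in>K. real (card (nbrs E v \<inter> K)) \<ge> (1 - eps) * real (card K))"

definition bucket :: "'a set \<Rightarrow> ('a \<Rightarrow> nat) \<Rightarrow> nat \<Rightarrow> 'a set" where
  "bucket K t j = {v\<in>K. t v = j}"

definition clique_preserved ::
  "('a \<Rightarrow> 'a \<Rightarrow> bool) \<Rightarrow> real \<Rightarrow> 'a set \<Rightarrow> nat \<Rightarrow> ('a \<Rightarrow> nat) \<Rightarrow> nat \<Rightarrow> bool" where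
  "clique_preserved E eps' K k t i \<longleftrightarrow>
     (\<forall>v\<in>K. (1 - eps') * real (card (nbrs E v \<inter> K)) / real k \<le> real (card (nbrs E v \<inter> bucket K t i))
          \<and> real (card (nbrs E v \<inter> bucket K t i)) \<le> (1 + eps') * real (card (nbrs E v \<inter> K)) / real k)"

text \<open>Uniformly random k-bucketing of K: each v in K independently picks t(v) uniformly
  from [k] = {1..k}; outside K the function is 0 (irrelevant).\<close>
definition random_bucketing :: "'a set \<Rightarrow> nat \<Rightarrow> ('a \<Rightarrow> nat) pmf" where
  "random_bucketing K k = Pi_pmf K 0 (\<lambda>_. pmf_of_set {1..k})"

end

theory Submission
  imports Defs
begin

text \<open>For a vertex v of K, the number of neighbours of v in bucket i is a sum of
  |N(v) \<inter> K| independent Bernoulli(1/k) variables, so its moment generating function is at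
  most exp(\<mu> (e^s - 1)) with \<mu> = |N(v) \<inter> K|/k. The multiplicative Chernoff bounds therefore
  bound the probability that it leaves [(1-\<epsilon>')\<mu>, (1+\<epsilon>')\<mu>] by 2 exp(-\<epsilon>'^2\<mu>/3). As K is
  \<epsilon>-almost-clique-like with \<epsilon> < 1/2, \<mu> \<ge> |K|/(2k); a union bound over the vertices of K
  finishes the proof.\<close>

lemma ln_one_plus_Pade_lower_bound:
  fixes x :: real
  assumes "0 \<le> x"
  shows "2 * x / (2 + x) \<le> ln (1 + x)"
proof -
  let ?f = "\<lambda>y::real. ln (1 + y) - 2 * y / (2 + y)"
  have "?f 0 \<le> ?f x"
  proof (rule DERIV_nonneg_imp_increasing_open[OF assms])
    fix y :: real assume y: "0 < y" "y < x"
    have "DERIV ?f y :> (1 / (1 + y) - (2 * (2 + y) - 2 * y) / (2 + y)^2)"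
      using y by (auto intro!: derivative_eq_intros simp: power2_eq_square)
    moreover have "1 / (1 + y) - (2 * (2 + y) - 2 * y) / (2 + y)^2 \<ge> 0"
      using y by (simp add: field_simps power2_eq_square) (simp add: divide_le_eq_1 add_pos_pos)
    ultimately show "\<exists>d. DERIV ?f y :> d \<and> d \<ge> 0" by blast
  qed (intro continuous_intros; use assms in auto)
  then show ?thesis by simp
qed

lemma exp_minus_le_quadratic:
  fixes x :: real
  assumes "0 \<le> x"
  shows "exp (- x) \<le> 1 - x + x^2 / 2"
proof -
  let ?f = "\<lambda>y::real. 1 - y + y^2 / 2 - exp (- y)"
  have "?f 0 \<le> ?f x"
  proof (rule DERIV_nonneg_imp_increasing_open[OF assms])
    fix y :: real assume "0 < y" "y < x"
    have "DERIV ?f y :> (- 1 + y + exp (- y))"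
      by (auto intro!: derivative_eq_intros)
    moreover have "- 1 + y + exp (- y) \<ge> 0"
      using exp_ge_add_one_self[of "- y"] by simp
    ultimately show "\<exists>d. DERIV ?f y :> d \<and> d \<ge> 0" by blast
  qed (intro continuous_intros; auto)
  then show ?thesis by simp
qed

lemma one_plus_mult_ln_one_plus_lower_bound:
  fixes x :: real
  assumes "0 \<le> x" "x \<le> 1"
  shows "x + x^2 / 3 \<le> (1 + x) * ln (1 + x)"
proof -
  have "x^3 \<le> x^2"
    using assms by (simp add: power_decreasing)
  then have "x + x^2 / 3 \<le> (1 + x) * (2 * x / (2 + x))"
    using assms by (simp add: field_simps power2_eq_square power3_eq_cube)
  also have "\<dots> \<le> (1 + x) * ln (1 + x)"
    using assms by (intro mult_left_mono ln_one_plus_Pade_lower_bound) auto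
  finally show ?thesis .
qed

context prob_space
begin

lemma Chernoff_multiplicative_ge:
  assumes integrable: "\<And>s. integrable M (\<lambda>x. exp (s * X x))"
    and mgf: "\<And>s. expectation (\<lambda>x. exp (s * X x)) \<le> exp (\<mu> * (exp s - 1))"
    and "0 \<le> \<mu>" "0 < \<delta>" "\<delta> \<le> 1"
  shows "prob {x\<in>space M. (1 + \<delta>) * \<mu> \<le> X x} \<le> exp (- (\<delta>^2 * \<mu> / 3))"
proof -
  define s where "s = ln (1 + \<delta>)"
  have "s > 0" "exp s = 1 + \<delta>"
    using assms by (auto simp: s_def)
  have "prob {x\<in>space M. (1 + \<delta>) * \<mu> \<le> X x}
      \<le> exp (- s * ((1 + \<delta>) * \<mu>)) * expectation (\<lambda>x. exp (s * X x))"
    using Chernoff_ineq_ge[OF \<open>s > 0\<close> _ sets.top, of X "(1 + \<delta>) * \<mu>"]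
      integrable_mult_indicator[OF sets.top integrable[of s]] set_integral_space[OF integrable[of s]]
    by (simp add: set_integrable_def)
  also have "\<dots> \<le> exp (- s * ((1 + \<delta>) * \<mu>)) * exp (\<mu> * \<delta>)"
    using mgf[of s] \<open>exp s = 1 + \<delta>\<close> by simp
  also have "\<dots> = exp (- \<mu> * ((1 + \<delta>) * ln (1 + \<delta>) - \<delta>))"
    by (simp add: s_def flip: exp_add) (simp add: algebra_simps)
  also have "\<dots> \<le> exp (- (\<delta>^2 * \<mu> / 3))"
  proof -
    have "\<mu> * (\<delta> + \<delta>^2 / 3) \<le> \<mu> * ((1 + \<delta>) * ln (1 + \<delta>))"
      using one_plus_mult_ln_one_plus_lower_bound[of \<delta>] assms by (intro mult_left_mono) auto
    then show ?thesis by (simp add: algebra_simps)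
  qed
  finally show ?thesis .
qed

lemma Chernoff_multiplicative_le:
  assumes integrable: "\<And>s. integrable M (\<lambda>x. exp (s * X x))"
    and mgf: "\<And>s. expectation (\<lambda>x. exp (s * X x)) \<le> exp (\<mu> * (exp s - 1))"
    and "0 \<le> \<mu>" "0 < \<delta>"
  shows "prob {x\<in>space M. X x \<le> (1 - \<delta>) * \<mu>} \<le> exp (- (\<delta>^2 * \<mu> / 2))"
proof -
  \<comment> \<open>The parameter s = \<delta> instead of the optimal -ln(1-\<delta>) already gives the exponent \<delta>^2/2.\<close>
  have "prob {x\<in>space M. X x \<le> (1 - \<delta>) * \<mu>}
      \<le> exp (\<delta> * ((1 - \<delta>) * \<mu>)) * expectation (\<lambda>x. exp (- \<delta> * X x))"
    using Chernoff_ineq_le[OF \<open>0 < \<delta>\<close> _ sets.top, of X "(1 - \<delta>) * \<mu>"]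
      integrable_mult_indicator[OF sets.top integrable[of "- \<delta>"]]
      set_integral_space[OF integrable[of "- \<delta>"]]
    by (simp add: set_integrable_def)
  also have "\<dots> \<le> exp (\<delta> * ((1 - \<delta>) * \<mu>)) * exp (\<mu> * (exp (- \<delta>) - 1))"
    using mgf[of "- \<delta>"] by simp
  also have "\<dots> = exp (\<mu> * (exp (- \<delta>) - 1 + \<delta> - \<delta>^2))"
    by (simp flip: exp_add) (simp add: algebra_simps power2_eq_square)
  also have "\<dots> \<le> exp (- (\<delta>^2 * \<mu> / 2))"
  proof -
    have "\<mu> * (exp (- \<delta>) - 1 + \<delta> - \<delta>^2) \<le> \<mu> * (- (\<delta>^2 / 2))"
      using exp_minus_le_quadratic[of \<delta>] assms by (intro mult_left_mono) auto
    then show ?thesis by (simp add: algebra_simps)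
  qed
  finally show ?thesis .
qed

lemma Chernoff_multiplicative_two_sided:
  assumes "X \<in> borel_measurable M"
    and "\<And>s. integrable M (\<lambda>x. exp (s * X x))"
    and "\<And>s. expectation (\<lambda>x. exp (s * X x)) \<le> exp (\<mu> * (exp s - 1))"
    and "0 \<le> \<mu>" "0 < \<delta>" "\<delta> \<le> 1"
  shows "prob {x\<in>space M. X x < (1 - \<delta>) * \<mu> \<or> (1 + \<delta>) * \<mu> < X x}
           \<le> 2 * exp (- (\<delta>^2 * \<mu> / 3))"
proof -
  have "prob {x\<in>space M. X x < (1 - \<delta>) * \<mu> \<or> (1 + \<delta>) * \<mu> < X x}
      \<le> prob ({x\<in>space M. X x \<le> (1 - \<delta>) * \<mu>} \<union> {x\<in>space M. (1 + \<delta>) * \<mu> \<le> X x})"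
    using assms(1) by (intro finite_measure_mono) auto
  also have "\<dots> \<le> prob {x\<in>space M. X x \<le> (1 - \<delta>) * \<mu>} + prob {x\<in>space M. (1 + \<delta>) * \<mu> \<le> X x}"
    using assms(1) by (intro measure_Un_le) auto
  also have "\<dots> \<le> exp (- (\<delta>^2 * \<mu> / 2)) + exp (- (\<delta>^2 * \<mu> / 3))"
    using Chernoff_multiplicative_le[of X \<mu> \<delta>] Chernoff_multiplicative_ge[of X \<mu> \<delta>] assms
    by (intro add_mono) auto
  also have "\<dots> \<le> 2 * exp (- (\<delta>^2 * \<mu> / 3))"
    using assms by (simp add: divide_left_mono)
  finally show ?thesis .
qed

end

lemma expectation_exp_card_Pi_pmf:
  fixes q :: "'b pmf"
  assumes "finite K" "S \<subseteq> K"
  shows "measure_pmf.expectation (Pi_pmf K d (\<lambda>_. q)) (\<lambda>t. exp (l * real (card {u\<in>S. t u = i})))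
           = (1 + pmf q i * (exp l - 1)) ^ card S"
proof -
  define f where "f = (\<lambda>u a. if u \<in> S then 1 + (exp l - 1) * indicator {i} a else 1 :: real)"
  have f_nonneg: "0 \<le> f u a" for u a
    by (auto simp: f_def indicator_def)
  have f_integrable: "integrable q (f u)" for u
    unfolding f_def by (cases "u \<in> S")
      (auto intro!: Bochner_Integration.integrable_add integrable_mult_right integrable_real_indicator
        simp: measure_pmf.emeasure_finite less_top[symmetric])
  have "exp (l * real (card {u\<in>S. t u = i})) = (\<Prod>u\<in>K. f u (t u))" for t :: "'a \<Rightarrow> 'b"
  proof -
    have "(\<Prod>u\<in>K. f u (t u)) = (\<Prod>u\<in>{u\<in>K. u \<in> S \<and> t u = i}. exp l)"
      unfolding f_def by (subst prod.inter_filter[OF assms(1)]) (auto intro!: prod.cong simp: indicator_def)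
    also have "{u\<in>K. u \<in> S \<and> t u = i} = {u\<in>S. t u = i}"
      using assms(2) by auto
    finally show ?thesis
      by (simp add: mult.commute flip: exp_of_nat_mult)
  qed
  then have "measure_pmf.expectation (Pi_pmf K d (\<lambda>_. q)) (\<lambda>t. exp (l * real (card {u\<in>S. t u = i})))
      = measure_pmf.expectation (Pi_pmf K d (\<lambda>_. q)) (\<lambda>t. \<Prod>u\<in>K. f u (t u))"
    by simp
  also have "\<dots> = (\<Prod>u\<in>K. measure_pmf.expectation q (f u))"
    using assms(1) f_nonneg f_integrable by (intro expectation_prod_Pi_pmf) auto
  also have "\<dots> = (\<Prod>u\<in>K. if u \<in> S then 1 + pmf q i * (exp l - 1) else 1)"
  proof (intro prod.cong refl)
    have "integrable q (indicator {i} :: 'b \<Rightarrow> real)"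
      by (simp add: integrable_real_indicator measure_pmf.emeasure_finite less_top[symmetric])
    then have "measure_pmf.expectation q (\<lambda>a. 1 + (exp l - 1) * indicator {i} a) = 1 + pmf q i * (exp l - 1)"
      by (simp add: measure_pmf_single mult.commute)
    then show "measure_pmf.expectation q (f u) = (if u \<in> S then 1 + pmf q i * (exp l - 1) else 1)" for u
      by (simp add: f_def)
  qed
  also have "\<dots> = (1 + pmf q i * (exp l - 1)) ^ card S"
    using assms by (simp add: prod.If_cases Int_absorb1)
  finally show ?thesis .
qed

lemma integrable_exp_card_Pi_pmf:
  assumes "finite S"
  shows "integrable (Pi_pmf K d p) (\<lambda>t. exp (l * real (card {u\<in>S. t u = i})))"
proof (rule measure_pmf.integrable_const_bound)
  have "\<bar>l * real (card {u\<in>S. t u = i})\<bar> \<le> \<bar>l\<bar> * real (card S)" for t :: "'a \<Rightarrow> 'b"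
    using card_mono[OF assms, of "{u\<in>S. t u = i}"] by (auto simp: abs_mult intro: mult_left_mono)
  then show "AE t in Pi_pmf K d p. norm (exp (l * real (card {u\<in>S. t u = i}))) \<le> exp (\<bar>l\<bar> * real (card S))"
    by (auto intro: order_trans[OF _ abs_le_D1])
qed simp

lemma expectation_exp_card_Pi_pmf_le:
  fixes q :: "'b pmf"
  assumes "finite K" "S \<subseteq> K"
  shows "measure_pmf.expectation (Pi_pmf K d (\<lambda>_. q)) (\<lambda>t. exp (l * real (card {u\<in>S. t u = i})))
           \<le> exp (pmf q i * real (card S) * (exp l - 1))"
proof -
  have "0 \<le> (1 - pmf q i) + pmf q i * exp l"
    using pmf_le_1[of q i] by simp
  then have "0 \<le> 1 + pmf q i * (exp l - 1)"
    by (simp add: algebra_simps)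
  then have "(1 + pmf q i * (exp l - 1)) ^ card S \<le> exp (pmf q i * (exp l - 1)) ^ card S"
    by (intro power_mono exp_ge_add_one_self)
  also have "\<dots> = exp (pmf q i * real (card S) * (exp l - 1))"
    by (simp add: mult_ac flip: exp_of_nat_mult)
  finally show ?thesis
    using assms by (simp add: expectation_exp_card_Pi_pmf)
qed

lemma prob_card_bucket_deviation:
  assumes "finite K" "S \<subseteq> K" "i \<in> {1..k}" "0 < \<delta>" "\<delta> \<le> 1"
  shows "measure_pmf.prob (random_bucketing K k)
           {t. real (card (S \<inter> bucket K t i)) < (1 - \<delta>) * real (card S) / real k
             \<or> (1 + \<delta>) * real (card S) / real k < real (card (S \<inter> bucket K t i))}
         \<le> 2 * exp (- (\<delta>^2 * real (card S)) / (3 * real k))"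
proof -
  have card_eq: "S \<inter> bucket K t i = {u\<in>S. t u = i}" for t
    using assms(2) by (auto simp: bucket_def)
  have "pmf (pmf_of_set {1..k}) i = 1 / k"
    using assms(3) by simp
  then have "measure_pmf.expectation (random_bucketing K k) (\<lambda>t. exp (l * real (card {u\<in>S. t u = i})))
      \<le> exp (card S / k * (exp l - 1))" for l
    using expectation_exp_card_Pi_pmf_le[OF assms(1,2), of 0 "pmf_of_set {1..k}" l i]
    unfolding random_bucketing_def by simp
  moreover have "integrable (random_bucketing K k) (\<lambda>t. exp (l * real (card {u\<in>S. t u = i})))" for l
    unfolding random_bucketing_def using assms(1,2) by (intro integrable_exp_card_Pi_pmf) (rule finite_subset)
  ultimately show ?thesis
    using measure_pmf.Chernoff_multiplicative_two_sided[of "\<lambda>t. real (card {u\<in>S. t u = i})"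
        "random_bucketing K k" "card S / k" \<delta>] assms(4,5)
    unfolding card_eq by (simp add: mult.commute)
qed

lemma prob_card_nbrs_bucket_deviation:
  assumes "finite K" "almost_clique_like E eps K" "eps \<le> 1/2" "v \<in> K"
    and "i \<in> {1..k}" "0 < \<delta>" "\<delta> \<le> 1"
  shows "measure_pmf.prob (random_bucketing K k)
           {t. real (card (nbrs E v \<inter> bucket K t i)) < (1 - \<delta>) * real (card (nbrs E v \<inter> K)) / real k
             \<or> (1 + \<delta>) * real (card (nbrs E v \<inter> K)) / real k < real (card (nbrs E v \<inter> bucket K t i))}
         \<le> 2 * exp (- (\<delta>^2 * real (card K)) / (6 * real k))"
proof -
  have "1 / 2 * real (card K) \<le> (1 - eps) * real (card K)"
    using assms(3) by (intro mult_right_mono) auto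
  also have "\<dots> \<le> real (card (nbrs E v \<inter> K))"
    using assms(2,4) by (simp add: almost_clique_like_def)
  finally have "\<delta>^2 * (1 / 2 * real (card K)) / (3 * k) \<le> \<delta>^2 * real (card (nbrs E v \<inter> K)) / (3 * k)"
    by (intro divide_right_mono mult_left_mono) auto
  then have exp_le: "exp (- (\<delta>^2 * real (card (nbrs E v \<inter> K))) / (3 * real k))
      \<le> exp (- (\<delta>^2 * real (card K)) / (6 * real k))"
    by simp
  have "nbrs E v \<inter> K \<inter> bucket K t i = nbrs E v \<inter> bucket K t i" for t
    by (auto simp: bucket_def)
  then have "measure_pmf.prob (random_bucketing K k)
           {t. real (card (nbrs E v \<inter> bucket K t i)) < (1 - \<delta>) * real (card (nbrs E v \<inter> K)) / real k
             \<or> (1 + \<delta>) * real (card (nbrs E v \<inter> K)) / real k < real (card (nbrs E v \<inter> bucket K t i))}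
         \<le> 2 * exp (- (\<delta>^2 * real (card (nbrs E v \<inter> K))) / (3 * real k))"
    using prob_card_bucket_deviation[of K "nbrs E v \<inter> K" i k \<delta>] assms(1,5-7) by auto
  also have "\<dots> \<le> 2 * exp (- (\<delta>^2 * real (card K)) / (6 * real k))"
    by (rule mult_left_mono[OF exp_le]) simp
  finally show ?thesis .
qed

theorem lemma4p7:
  fixes E :: "'a \<Rightarrow> 'a \<Rightarrow> bool" and K :: "'a set" and eps eps' :: real and k i :: nat
  assumes "\<And>u v. E u v \<Longrightarrow> E v u"
    and "\<And>v. \<not> E v v"
    and "finite K"
    and "eps > 0" and "eps' > 0" and "eps + eps' < 1/2"
    and "almost_clique_like E eps K"
    and "k \<ge> 1"
    and "i \<in> {1..k}"
  shows "measure_pmf.prob (random_bucketing K k) {t. \<not> clique_preserved E eps' K k t i}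
           \<le> 2 * real (card K) * exp (- (eps'^2 * real (card K)) / (6 * real k))"
proof -
  define deviates where "deviates v = {t.
    real (card (nbrs E v \<inter> bucket K t i)) < (1 - eps') * real (card (nbrs E v \<inter> K)) / real k
    \<or> (1 + eps') * real (card (nbrs E v \<inter> K)) / real k < real (card (nbrs E v \<inter> bucket K t i))}" for v
  have "measure_pmf.prob (random_bucketing K k) {t. \<not> clique_preserved E eps' K k t i}
      = measure_pmf.prob (random_bucketing K k) (\<Union>v\<in>K. deviates v)"
    by (rule arg_cong[where f = "measure_pmf.prob _"]) (auto simp: clique_preserved_def deviates_def not_le)
  also have "\<dots> \<le> (\<Sum>v\<in>K. measure_pmf.prob (random_bucketing K k) (deviates v))"
    using assms(3) by (intro measure_pmf.finite_measure_subadditive_finite) auto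
  also have "\<dots> \<le> (\<Sum>v\<in>K. 2 * exp (- (eps'^2 * real (card K)) / (6 * real k)))"
    unfolding deviates_def using assms
    by (intro sum_mono prob_card_nbrs_bucket_deviation[where eps = eps]) auto
  finally show ?thesis
    by simp
qed

end
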